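(* Let $\mathscr{F}$ be a family of languages closed under union, product, Kleene closure and rational transductions. Let $S$ be a semigroup, $\sigma : X^+ \to S$ a choice of generators for $S$, $S^0$ the semigroup $S$ with a new zero $0$ adjoined, $Y = X \cup \{z\}$ for a new letter $z$, and $\tau : Y^+ \to S^0$ the extension of $\sigma$ with $z\tau = 0$. Then $L_\sigma(S) \in \mathscr{F}$ if and only if $L_\tau(S^0) \in \mathscr{F}$.
   Context: For a semigroup $S$, $S^1$ denotes the monoid obtained by adjoining a new identity $1$ (even if $S$ already has one). A choice of generators for $S$ is a surjective morphism $\sigma : X^+ \to S$ from a free semigroup; it extends uniquely to $\sigma^1 : X^* \to S^1$. Let $\overline{X} = \{\overline{x} : x \in X\}$ be a set of formal inverses, $\hat{X} = X \cup \overline{X}$. The loop automaton of $S$ with respect to $\sigma$ is the directed labelled graph with vertex set $S^1$, having for each $a \in S^1$ and $x \in X$ an edge from $a$ to $a(x\sigma)$ labelled $x$ and an edge from $a(x\sigma)$ to $a$ labelled $\overline{x}$. The loop problem $L_\sigma(S) \subseteq \hat{X}^*$ is the set of words labelling paths from $1$ to $1$ in this graph (including the empty word). A rational transduction is a relation between free monoids realised by a finite-state transducer; the image of a language under it is the set of outputs paired with inputs from the language. *)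

theory Defs
  imports Main
begin

text \<open>All alphabets are finite subsets of a universal letter type nat.
A word over the doubled alphabet hat X is encoded as a nat list: the letter x is
encoded as 2*x and its formal inverse xbar as 2*x+1.\<close>

definition pos_letter :: "nat \<Rightarrow> nat" where "pos_letter x = 2 * x"
definition inv_letter :: "nat \<Rightarrow> nat" where "inv_letter x = 2 * x + 1"

text \<open>Multiplication of S^1, where S has multiplication m and None is the adjoined identity.\<close>
fun mult1 :: "('t \<Rightarrow> 't \<Rightarrow> 't) \<Rightarrow> 't option \<Rightarrow> 't option \<Rightarrow> 't option" where
  "mult1 m None b = b"
| "mult1 m (Some a) None = Some a"
| "mult1 m (Some a) (Some b) = Some (m a b)"

text \<open>Multiplication of S^0: the semigroup S with a new zero None adjoined.\<close>
fun mult0 :: "'s::semigroup_mult option \<Rightarrow> 's option \<Rightarrow> 's option" where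
  "mult0 (Some a) (Some b) = Some (a * b)"
| "mult0 _ _ = None"

fun word_val :: "('t \<Rightarrow> 't \<Rightarrow> 't) \<Rightarrow> (nat \<Rightarrow> 't) \<Rightarrow> nat list \<Rightarrow> 't" where
  "word_val m g [x] = g x"
| "word_val m g (x # y # ys) = m (g x) (word_val m g (y # ys))"
| "word_val m g [] = undefined"

definition choice_of_generators :: "('t \<Rightarrow> 't \<Rightarrow> 't) \<Rightarrow> nat set \<Rightarrow> (nat \<Rightarrow> 't) \<Rightarrow> bool" where
  "choice_of_generators m X g \<longleftrightarrow>
     (\<forall>s. \<exists>w. w \<noteq> [] \<and> set w \<subseteq> X \<and> word_val m g w = s)"

text \<open>Paths in the loop automaton (vertex set S^1).\<close>
inductive loop_path :: "('t \<Rightarrow> 't \<Rightarrow> 't) \<Rightarrow> nat set \<Rightarrow> (nat \<Rightarrow> 't)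
    \<Rightarrow> 't option \<Rightarrow> nat list \<Rightarrow> 't option \<Rightarrow> bool"
  for m X g where
  nil: "loop_path m X g a [] a"
| fwd: "x \<in> X \<Longrightarrow> loop_path m X g (mult1 m a (Some (g x))) w c
        \<Longrightarrow> loop_path m X g a (pos_letter x # w) c"
| bwd: "x \<in> X \<Longrightarrow> loop_path m X g a w c
        \<Longrightarrow> loop_path m X g (mult1 m a (Some (g x))) (inv_letter x # w) c"

definition loop_problem :: "('t \<Rightarrow> 't \<Rightarrow> 't) \<Rightarrow> nat set \<Rightarrow> (nat \<Rightarrow> 't) \<Rightarrow> nat list set" where
  "loop_problem m X g = {w. loop_path m X g None w None}"

inductive trans_run :: "(nat \<times> nat list \<times> nat list \<times> nat) set
    \<Rightarrow> nat \<Rightarrow> nat list \<Rightarrow> nat list \<Rightarrow> nat \<Rightarrow> bool" for \<Delta> where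
  nil: "trans_run \<Delta> p [] [] p"
| step: "(p, u, v, q) \<in> \<Delta> \<Longrightarrow> trans_run \<Delta> q u' v' r
         \<Longrightarrow> trans_run \<Delta> p (u @ u') (v @ v') r"

definition transduce :: "(nat \<times> nat list \<times> nat list \<times> nat) set \<Rightarrow> nat \<Rightarrow> nat set
    \<Rightarrow> nat list set \<Rightarrow> nat list set" where
  "transduce \<Delta> q0 Fin L = {v. \<exists>u\<in>L. \<exists>q\<in>Fin. trans_run \<Delta> q0 u v q}"

definition lang_prod :: "nat list set \<Rightarrow> nat list set \<Rightarrow> nat list set" where
  "lang_prod A B = {u @ v | u v. u \<in> A \<and> v \<in> B}"

inductive_set kleene_star :: "nat list set \<Rightarrow> nat list set" for A where
  emp: "[] \<in> kleene_star A"
| app: "u \<in> A \<Longrightarrow> v \<in> kleene_star A \<Longrightarrow> u @ v \<in> kleene_star A"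

definition closed_family :: "(nat list set \<Rightarrow> bool) \<Rightarrow> bool" where
  "closed_family \<F> \<longleftrightarrow>
     (\<forall>A B. \<F> A \<longrightarrow> \<F> B \<longrightarrow> \<F> (A \<union> B)) \<and>
     (\<forall>A B. \<F> A \<longrightarrow> \<F> B \<longrightarrow> \<F> (lang_prod A B)) \<and>
     (\<forall>A. \<F> A \<longrightarrow> \<F> (kleene_star A)) \<and>
     (\<forall>\<Delta> q0 Fin A. finite \<Delta> \<longrightarrow> finite Fin \<longrightarrow> \<F> A \<longrightarrow> \<F> (transduce \<Delta> q0 Fin A))"

end

theory Submission
  imports Defs
begin

text \<open>A loop at the identity of \<open>S\<^sup>0\<close> either avoids the letters \<open>z, z\<^sup>-\<close>, and is then a
  loop of \<open>S\<close>, or it must enter the zero, which happens only by reading \<open>z\<close>, and leave it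
  again, which happens only by reading \<open>z\<^sup>-\<close>; in between it may read anything, since the zero
  carries a loop for every letter. Because every vertex of the loop automaton of \<open>S\<close> is
  reachable from \<open>1\<close> and reaches \<open>1\<close>, the parts before the first \<open>z\<close> and after the last
  \<open>z\<^sup>-\<close> are exactly the prefixes and suffixes of loops of \<open>S\<close>. Hence, writing \<open>X\<^sup>*, Y\<^sup>*\<close>
  for the words over the doubled alphabets, \<open>L\<^sub>\<tau>(S\<^sup>0) = L \<union> Pref(L) z Y\<^sup>* z\<^sup>- Suff(L)\<close> and
  \<open>L = L\<^sub>\<tau>(S\<^sup>0) \<inter> X\<^sup>*\<close>; prefixes, suffixes and intersection with \<open>X\<^sup>*\<close> are rational
  transductions of \<open>L\<close>, and so is \<open>Y\<^sup>*\<close>, as \<open>L\<close> contains the empty word.\<close>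

definition doubled_alphabet :: "nat set \<Rightarrow> nat set" where
  "doubled_alphabet X = pos_letter ` X \<union> inv_letter ` X"

lemma pos_letter_neq_inv_letter [simp]:
  "pos_letter x \<noteq> inv_letter y" "inv_letter y \<noteq> pos_letter x"
  by (simp_all add: pos_letter_def inv_letter_def) presburger+

lemma pos_letter_eq_iff [simp]: "pos_letter x = pos_letter y \<longleftrightarrow> x = y"
  by (simp add: pos_letter_def)

lemma inv_letter_eq_iff [simp]: "inv_letter x = inv_letter y \<longleftrightarrow> x = y"
  by (simp add: inv_letter_def)

lemma pos_letter_in_doubled_alphabet [simp]: "pos_letter x \<in> doubled_alphabet X \<longleftrightarrow> x \<in> X"
  by (auto simp: doubled_alphabet_def)

lemma inv_letter_in_doubled_alphabet [simp]: "inv_letter x \<in> doubled_alphabet X \<longleftrightarrow> x \<in> X"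
  by (auto simp: doubled_alphabet_def)

lemma doubled_alphabet_insert:
  "doubled_alphabet (insert z X) = insert (pos_letter z) (insert (inv_letter z) (doubled_alphabet X))"
  by (auto simp: doubled_alphabet_def)

lemma finite_doubled_alphabet: "finite X \<Longrightarrow> finite (doubled_alphabet X)"
  by (simp add: doubled_alphabet_def)

lemma loop_path_letters: "loop_path m X g a w c \<Longrightarrow> w \<in> lists (doubled_alphabet X)"
  by (induction rule: loop_path.induct) auto

lemma loop_path_append:
  "loop_path m X g a u b \<Longrightarrow> loop_path m X g b v c \<Longrightarrow> loop_path m X g a (u @ v) c"
  by (induction rule: loop_path.induct) (auto intro: loop_path.intros)

lemma loop_path_append_iff:
  "loop_path m X g a (u @ v) c \<longleftrightarrow> (\<exists>b. loop_path m X g a u b \<and> loop_path m X g b v c)"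
proof
  show "loop_path m X g a (u @ v) c \<Longrightarrow> \<exists>b. loop_path m X g a u b \<and> loop_path m X g b v c"
  proof (induction u arbitrary: a)
    case Nil
    then show ?case by (auto intro: loop_path.nil)
  next
    case (Cons x u)
    from \<open>loop_path m X g a ((x # u) @ v) c\<close> show ?case
      by (cases rule: loop_path.cases) (auto dest!: Cons.IH intro: loop_path.intros)
  qed
qed (auto intro: loop_path_append)

lemma loop_path_split_at_letter:
  assumes "loop_path m X g a (u @ c # v) e"
  obtains b b' where "loop_path m X g a u b" "loop_path m X g b [c] b'" "loop_path m X g b' v e"
  using assms loop_path_append_iff[of m X g a u "[c] @ v" e] loop_path_append_iff[of m X g _ "[c]" v e]
  by auto

lemma loop_path_pos_letter_iff:
  "loop_path m X g a [pos_letter x] c \<longleftrightarrow> x \<in> X \<and> c = mult1 m a (Some (g x))"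
  by (auto elim!: loop_path.cases intro: loop_path.intros)

lemma loop_path_inv_letter_iff:
  "loop_path m X g a [inv_letter x] c \<longleftrightarrow> x \<in> X \<and> a = mult1 m c (Some (g x))"
  by (auto elim!: loop_path.cases intro: loop_path.intros)

lemma mult1_Some_assoc:
  "mult1 (*) (mult1 (*) a (Some x)) (Some y) = mult1 (*) a (Some (x * y :: 's::semigroup_mult))"
  by (cases a) (simp_all add: mult.assoc)

lemma word_val_Cons: "w \<noteq> [] \<Longrightarrow> word_val m g (x # w) = m (g x) (word_val m g w)"
  by (cases w) simp_all

lemma loop_path_word_val:
  fixes \<sigma> :: "nat \<Rightarrow> 's::semigroup_mult"
  assumes "w \<noteq> []" "set w \<subseteq> X"
  shows "loop_path (*) X \<sigma> a (map pos_letter w) (mult1 (*) a (Some (word_val (*) \<sigma> w)))"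
  using assms
proof (induction w arbitrary: a)
  case (Cons x w)
  show ?case
  proof (cases "w = []")
    case False
    then show ?thesis
      using Cons.IH[of "mult1 (*) a (Some (\<sigma> x))"] Cons.prems
      by (auto simp: word_val_Cons mult1_Some_assoc intro: loop_path.fwd)
  qed (use Cons.prems in \<open>auto intro: loop_path.intros\<close>)
qed simp

lemma loop_path_word_val_rev:
  fixes \<sigma> :: "nat \<Rightarrow> 's::semigroup_mult"
  assumes "w \<noteq> []" "set w \<subseteq> X"
  shows "loop_path (*) X \<sigma> (mult1 (*) a (Some (word_val (*) \<sigma> w))) (map inv_letter (rev w)) a"
  using assms
proof (induction w arbitrary: a)
  case (Cons x w)
  have step: "loop_path (*) X \<sigma> (mult1 (*) a (Some (\<sigma> x))) [inv_letter x] a"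
    using Cons.prems by (simp add: loop_path_inv_letter_iff)
  show ?case
  proof (cases "w = []")
    case False
    then show ?thesis
      using loop_path_append[OF Cons.IH[of "mult1 (*) a (Some (\<sigma> x))"] step] Cons.prems
      by (simp add: word_val_Cons mult1_Some_assoc)
  qed (use step in simp)
qed simp

lemma loop_paths_through_vertex:
  fixes \<sigma> :: "nat \<Rightarrow> 's::semigroup_mult"
  assumes "choice_of_generators (*) X \<sigma>"
  obtains u v where "loop_path (*) X \<sigma> None u b" "loop_path (*) X \<sigma> b v None"
proof (cases b)
  case None
  then show ?thesis using that loop_path.nil by metis
next
  case (Some s)
  with assms obtain w where "w \<noteq> []" "set w \<subseteq> X" "b = Some (word_val (*) \<sigma> w)"
    unfolding choice_of_generators_def by metis
  then show ?thesis
    using that loop_path_word_val[of w X \<sigma> None] loop_path_word_val_rev[of w X \<sigma> None] by simp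
qed

lemma prefix_of_loop_problem_iff:
  fixes \<sigma> :: "nat \<Rightarrow> 's::semigroup_mult"
  assumes "choice_of_generators (*) X \<sigma>"
  shows "(\<exists>v. u @ v \<in> loop_problem (*) X \<sigma>) \<longleftrightarrow> (\<exists>b. loop_path (*) X \<sigma> None u b)"
  unfolding loop_problem_def
  by (metis assms loop_path_append_iff loop_paths_through_vertex mem_Collect_eq)

lemma suffix_of_loop_problem_iff:
  fixes \<sigma> :: "nat \<Rightarrow> 's::semigroup_mult"
  assumes "choice_of_generators (*) X \<sigma>"
  shows "(\<exists>u. u @ v \<in> loop_problem (*) X \<sigma>) \<longleftrightarrow> (\<exists>b. loop_path (*) X \<sigma> b v None)"
  unfolding loop_problem_def
  by (metis assms loop_path_append_iff loop_paths_through_vertex mem_Collect_eq)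

text \<open>Vertices of the loop automaton of \<open>S\<^sup>0\<close> have type \<open>'s option option\<close>: \<open>None\<close> is the
  adjoined identity, \<open>Some None\<close> the zero, and \<open>map_option Some\<close> embeds \<open>S\<^sup>1\<close>.\<close>

lemma zero_or_lift_cases:
  obtains "b = Some None" | b0 where "b = map_option Some b0"
  by (metis not_None_eq option.simps(8,9))

lemma lift_neq_zero [simp]: "map_option Some a \<noteq> Some None" "Some None \<noteq> map_option Some a"
  by (cases a; simp)+

lemma lift_eq_lift_iff [simp]: "map_option Some a = map_option Some b \<longleftrightarrow> a = b"
  by (cases a; cases b) simp_all

lemma mult1_zero_right [simp]: "mult1 mult0 a (Some None) = Some None"
  by (cases a) simp_all

lemma mult1_lift:
  "mult1 mult0 (map_option Some a) (Some (Some s)) = map_option Some (mult1 (*) a (Some s))"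
  by (cases a) simp_all

lemma loop_path_zero_to_zero:
  "w \<in> lists (doubled_alphabet Y) \<Longrightarrow> loop_path mult0 Y g (Some None) w (Some None)"
proof (induction w)
  case (Cons c w)
  then obtain y where "y \<in> Y" "c = pos_letter y \<or> c = inv_letter y"
    by (auto simp: doubled_alphabet_def)
  moreover have "loop_path mult0 Y g (Some None) (pos_letter y # w) (Some None)"
    using loop_path.fwd[OF \<open>y \<in> Y\<close>, where m = mult0 and a = "Some None"] Cons by simp
  moreover have "loop_path mult0 Y g (Some None) (inv_letter y # w) (Some None)"
    using loop_path.bwd[OF \<open>y \<in> Y\<close>, where m = mult0 and a = "Some None"] Cons by simp
  ultimately show ?case by blast
qed (rule loop_path.nil)

context
  fixes X :: "nat set" and \<sigma> :: "nat \<Rightarrow> 's::semigroup_mult" and z :: nat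
  assumes z_notin: "z \<notin> X"
begin

abbreviation \<tau> :: "nat \<Rightarrow> 's option" where
  "\<tau> \<equiv> \<lambda>y. if y = z then None else Some (\<sigma> y)"

lemma loop_path_lift:
  "loop_path (*) X \<sigma> a w c \<Longrightarrow>
   loop_path mult0 (insert z X) \<tau> (map_option Some a) w (map_option Some c)"
proof (induction rule: loop_path.induct)
  case (fwd x a w c)
  with z_notin have "x \<noteq> z" by auto
  with fwd show ?case by (auto intro!: loop_path.fwd simp: mult1_lift)
next
  case (bwd x a w c)
  with z_notin have "x \<noteq> z" by auto
  with bwd show ?case
    using loop_path.bwd[of x "insert z X" mult0 \<tau> "map_option Some a" w "map_option Some c"]
    by (simp add: mult1_lift)
qed (rule loop_path.nil)

lemma loop_path_unlift:
  assumes "loop_path mult0 (insert z X) \<tau> (map_option Some a) w c'"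
    and "w \<in> lists (doubled_alphabet X)"
  obtains c where "c' = map_option Some c" "loop_path (*) X \<sigma> a w c"
proof -
  have "\<exists>c. c' = map_option Some c \<and> loop_path (*) X \<sigma> a w c"
    if "loop_path mult0 (insert z X) \<tau> a' w c'" "w \<in> lists (doubled_alphabet X)"
      "a' = map_option Some a" for a' a
    using that
  proof (induction arbitrary: a rule: loop_path.induct)
    case (fwd x a' w c')
    with z_notin have "x \<in> X" "x \<noteq> z" by auto
    with fwd show ?case by (auto simp: mult1_lift intro: loop_path.fwd)
  next
    case (bwd x a' w c')
    with z_notin have x: "x \<in> X" "x \<noteq> z" by auto
    show ?case
    proof (cases a' rule: zero_or_lift_cases)
      case 1
      with bwd.prems x show ?thesis by simp
    next
      case (2 b0)
      with bwd x show ?thesis by (auto simp: mult1_lift intro: loop_path.bwd)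
    qed
  qed (auto intro: loop_path.nil)
  with assms that show ?thesis by blast
qed

lemma loop_path_from_zero:
  assumes "loop_path mult0 (insert z X) \<tau> (Some None) w c" "w \<in> lists (doubled_alphabet X)"
  shows "c = Some None"
proof -
  have "c = Some None"
    if "loop_path mult0 (insert z X) \<tau> a w c" "w \<in> lists (doubled_alphabet X)" "a = Some None"
    for a
    using that
  proof (induction rule: loop_path.induct)
    case (bwd x a w c)
    with z_notin have "x \<noteq> z" by auto
    with bwd show ?case
      by (cases a rule: zero_or_lift_cases) (auto simp: mult1_lift)
  qed auto
  with assms show ?thesis by blast
qed

lemma first_zero_letter:
  assumes "loop_path mult0 (insert z X) \<tau> None (u @ c # r) e"
    and "u \<in> lists (doubled_alphabet X)" "c \<in> {pos_letter z, inv_letter z}"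
  shows "c = pos_letter z" "\<exists>b. loop_path (*) X \<sigma> None u b"
proof -
  from assms(1) obtain b' b'' where u: "loop_path mult0 (insert z X) \<tau> None u b'"
    and c: "loop_path mult0 (insert z X) \<tau> b' [c] b''"
    by (rule loop_path_split_at_letter)
  obtain b where b: "b' = map_option Some b" "loop_path (*) X \<sigma> None u b"
    using loop_path_unlift[of None u b'] u assms(2) by auto
  then show "\<exists>b. loop_path (*) X \<sigma> None u b" by blast
  show "c = pos_letter z"
    using assms(3) c b(1) by (auto simp: loop_path_inv_letter_iff)
qed

lemma last_zero_letter:
  assumes "loop_path mult0 (insert z X) \<tau> e (r @ c # v) None"
    and "v \<in> lists (doubled_alphabet X)" "c \<in> {pos_letter z, inv_letter z}"
  shows "c = inv_letter z" "\<exists>b. loop_path (*) X \<sigma> b v None"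
proof -
  from assms(1) obtain d' d'' where c: "loop_path mult0 (insert z X) \<tau> d' [c] d''"
    and v: "loop_path mult0 (insert z X) \<tau> d'' v None"
    by (rule loop_path_split_at_letter)
  obtain d where d: "d'' = map_option Some d"
  proof (cases d'' rule: zero_or_lift_cases)
    case 1
    with loop_path_from_zero v assms(2) show ?thesis by auto
  qed
  with v assms(2) have "loop_path (*) X \<sigma> d v None"
    by (auto elim: loop_path_unlift[of d v None])
  then show "\<exists>b. loop_path (*) X \<sigma> b v None" by blast
  show "c = inv_letter z"
    using assms(3) c d by (auto simp: loop_path_pos_letter_iff)
qed

lemma loop_problem_restrict:
  "loop_problem (*) X \<sigma> = loop_problem mult0 (insert z X) \<tau> \<inter> lists (doubled_alphabet X)"
  unfolding loop_problem_def
  using loop_path_lift[of None _ None] loop_path_letters loop_path_unlift[of None _ None]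
  by fastforce

lemma loop_word_through_zero:
  assumes "w \<in> loop_problem mult0 (insert z X) \<tau>" "w \<notin> lists (doubled_alphabet X)"
  obtains u mid v where "w = u @ pos_letter z # mid @ inv_letter z # v"
    "mid \<in> lists (doubled_alphabet (insert z X))"
    "\<exists>b. loop_path (*) X \<sigma> None u b" "\<exists>b. loop_path (*) X \<sigma> b v None"
proof -
  let ?Z = "{pos_letter z, inv_letter z}"
  have w: "loop_path mult0 (insert z X) \<tau> None w None"
    using assms(1) by (simp add: loop_problem_def)
  have letters: "w \<in> lists (doubled_alphabet (insert z X))"
    using loop_path_letters[OF w] .
  obtain u c r where ucr: "w = u @ c # r" "c \<notin> doubled_alphabet X"
    "u \<in> lists (doubled_alphabet X)"
    using assms(2) split_list_first_prop[of w "\<lambda>x. x \<notin> doubled_alphabet X"] by auto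
  have "c \<in> ?Z" using letters ucr by (auto simp: doubled_alphabet_insert)
  note first = first_zero_letter[OF w[unfolded ucr(1)] ucr(3) this]
  have "r \<notin> lists (doubled_alphabet X)"
  proof
    assume "r \<in> lists (doubled_alphabet X)"
    from last_zero_letter(1)[OF w[unfolded ucr(1)] this] first(1) \<open>c \<in> ?Z\<close>
    show False by simp
  qed
  then obtain mid c' v where r: "r = mid @ c' # v" "c' \<notin> doubled_alphabet X"
    "v \<in> lists (doubled_alphabet X)"
    using split_list_last_prop[of r "\<lambda>x. x \<notin> doubled_alphabet X"] by auto
  have "c' \<in> ?Z" using letters ucr(1) r by (auto simp: doubled_alphabet_insert)
  moreover have "loop_path mult0 (insert z X) \<tau> None ((u @ c # mid) @ c' # v) None"
    using w unfolding ucr(1) r(1) by simp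
  ultimately have last: "c' = inv_letter z" "\<exists>b. loop_path (*) X \<sigma> b v None"
    using last_zero_letter[OF _ r(3)] by blast+
  show ?thesis
    using that[of u mid v] w first last letters unfolding ucr(1) r(1) by simp
qed

lemma loop_word_through_zero_intro:
  assumes "loop_path (*) X \<sigma> None u b" "loop_path (*) X \<sigma> b' v None"
    and "mid \<in> lists (doubled_alphabet (insert z X))"
  shows "u @ pos_letter z # mid @ inv_letter z # v \<in> loop_problem mult0 (insert z X) \<tau>"
proof -
  let ?P = "loop_path mult0 (insert z X) \<tau>"
  have "?P None u (map_option Some b)" "?P (map_option Some b') v None"
    using loop_path_lift[OF assms(1)] loop_path_lift[OF assms(2)] by simp_all
  moreover have "?P (map_option Some b) [pos_letter z] (Some None)"
    "?P (Some None) [inv_letter z] (map_option Some b')"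
    by (simp_all add: loop_path_pos_letter_iff loop_path_inv_letter_iff)
  moreover have "?P (Some None) mid (Some None)"
    using loop_path_zero_to_zero[OF assms(3)] .
  ultimately have "?P None (u @ [pos_letter z] @ mid @ [inv_letter z] @ v) None"
    by (meson loop_path_append)
  then show ?thesis by (simp add: loop_problem_def)
qed

lemma loop_problem_adjoin_zero:
  assumes "choice_of_generators (*) X \<sigma>"
  shows "loop_problem mult0 (insert z X) \<tau> =
    loop_problem (*) X \<sigma> \<union>
    lang_prod {u @ [pos_letter z] | u v. u @ v \<in> loop_problem (*) X \<sigma>}
      (lang_prod (lists (doubled_alphabet (insert z X)))
        {[inv_letter z] @ v | u v. u @ v \<in> loop_problem (*) X \<sigma>})"
  (is "?LZ = ?L \<union> lang_prod ?A (lang_prod ?M ?C)")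
proof
  show "?LZ \<subseteq> ?L \<union> lang_prod ?A (lang_prod ?M ?C)"
  proof
    fix w assume w: "w \<in> ?LZ"
    show "w \<in> ?L \<union> lang_prod ?A (lang_prod ?M ?C)"
    proof (cases "w \<in> lists (doubled_alphabet X)")
      case True
      with w show ?thesis by (simp add: loop_problem_restrict)
    next
      case False
      then obtain u mid v where uv: "w = u @ pos_letter z # mid @ inv_letter z # v" "mid \<in> ?M"
        "\<exists>b. loop_path (*) X \<sigma> None u b" "\<exists>b. loop_path (*) X \<sigma> b v None"
        using loop_word_through_zero[OF w] by blast
      have "u @ [pos_letter z] \<in> ?A" "[inv_letter z] @ v \<in> ?C"
        using uv(3,4) prefix_of_loop_problem_iff[OF assms] suffix_of_loop_problem_iff[OF assms]
        by blast+
      then have "(u @ [pos_letter z]) @ mid @ [inv_letter z] @ v \<in> lang_prod ?A (lang_prod ?M ?C)"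
        using uv(2) unfolding lang_prod_def by blast
      with uv(1) show ?thesis by simp
    qed
  qed
  show "?L \<union> lang_prod ?A (lang_prod ?M ?C) \<subseteq> ?LZ"
  proof
    fix w assume "w \<in> ?L \<union> lang_prod ?A (lang_prod ?M ?C)"
    then show "w \<in> ?LZ"
    proof
      assume "w \<in> ?L"
      then show ?thesis by (simp add: loop_problem_restrict)
    next
      assume "w \<in> lang_prod ?A (lang_prod ?M ?C)"
      then obtain u u' mid v v' where w: "w = (u @ [pos_letter z]) @ mid @ [inv_letter z] @ v"
        and uv: "u @ u' \<in> ?L" "mid \<in> ?M" "v' @ v \<in> ?L"
        unfolding lang_prod_def by blast
      obtain b b' where "loop_path (*) X \<sigma> None u b" "loop_path (*) X \<sigma> b' v None"
        using uv(1,3) prefix_of_loop_problem_iff[OF assms] suffix_of_loop_problem_iff[OF assms]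
        by blast
      from loop_word_through_zero_intro[OF this uv(2)] show ?thesis
        unfolding w by simp
    qed
  qed
qed

end

definition two_phase_transducer ::
    "nat set \<Rightarrow> (nat \<Rightarrow> nat list) \<Rightarrow> nat list \<Rightarrow> (nat \<Rightarrow> nat list)
     \<Rightarrow> (nat \<times> nat list \<times> nat list \<times> nat) set" where
  "two_phase_transducer H f h g =
     (\<lambda>c. (0, [c], f c, 0)) ` H \<union> {(0, [], h, 1)} \<union> (\<lambda>c. (1, [c], g c, 1)) ` H"

lemma finite_two_phase_transducer: "finite H \<Longrightarrow> finite (two_phase_transducer H f h g)"
  by (simp add: two_phase_transducer_def)

lemma trans_run_two_phase_second:
  "trans_run (two_phase_transducer H f h g) p u v q \<Longrightarrow> p = 1 \<Longrightarrow>
   q = 1 \<and> u \<in> lists H \<and> v = concat (map g u)"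
  by (induction rule: trans_run.induct) (auto simp: two_phase_transducer_def)

lemma trans_run_two_phase_first:
  "trans_run (two_phase_transducer H f h g) p w out q \<Longrightarrow> p = 0 \<Longrightarrow> q = 1 \<Longrightarrow>
   \<exists>u v. w = u @ v \<and> w \<in> lists H \<and> out = concat (map f u) @ h @ concat (map g v)"
proof (induction rule: trans_run.induct)
  case (step p u v p' u' v' q)
  from step.hyps(1) step.prems(1) consider
      c where "c \<in> H" "u = [c]" "v = f c" "p' = 0"
    | "u = []" "v = h" "p' = 1"
    by (auto simp: two_phase_transducer_def)
  then show ?case
  proof cases
    case 1
    with step.IH step.prems obtain u1 u2 where
      "u' = u1 @ u2" "u' \<in> lists H" "v' = concat (map f u1) @ h @ concat (map g u2)"
      by blast
    with 1 show ?thesis by (intro exI[of _ "c # u1"] exI[of _ u2]) simp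
  next
    case 2
    with trans_run_two_phase_second[OF step.hyps(2)] step.prems show ?thesis
      by (intro exI[of _ "[]"] exI[of _ u']) simp
  qed
qed simp

lemma trans_run_two_phase_intro:
  assumes "u \<in> lists H" "v \<in> lists H"
  shows "trans_run (two_phase_transducer H f h g) 0 (u @ v)
           (concat (map f u) @ h @ concat (map g v)) 1"
proof -
  let ?T = "two_phase_transducer H f h g"
  have second: "trans_run ?T 1 v (concat (map g v)) 1"
    using assms(2)
  proof (induction v)
    case (Cons c v)
    then show ?case
      using trans_run.step[of 1 "[c]" "g c" 1 ?T v] by (simp add: two_phase_transducer_def)
  qed (simp add: trans_run.nil)
  show ?thesis
    using assms(1)
  proof (induction u)
    case Nil
    then show ?case
      using trans_run.step[OF _ second, of 0 "[]" h] by (simp add: two_phase_transducer_def)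
  next
    case (Cons c u)
    then show ?case
      using trans_run.step[of 0 "[c]" "f c" 0 ?T] by (simp add: two_phase_transducer_def)
  qed
qed

lemma transduce_two_phase:
  "transduce (two_phase_transducer H f h g) 0 {1} L =
   {concat (map f u) @ h @ concat (map g v) | u v. u @ v \<in> L \<and> u @ v \<in> lists H}"
proof (intro equalityI subsetI)
  fix out assume "out \<in> transduce (two_phase_transducer H f h g) 0 {1} L"
  then obtain w where "w \<in> L" "trans_run (two_phase_transducer H f h g) 0 w out 1"
    unfolding transduce_def by blast
  with trans_run_two_phase_first[OF this(2)] show
    "out \<in> {concat (map f u) @ h @ concat (map g v) | u v. u @ v \<in> L \<and> u @ v \<in> lists H}"
    by blast
next
  fix out assume "out \<in> {concat (map f u) @ h @ concat (map g v) | u v. u @ v \<in> L \<and> u @ v \<in> lists H}"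
  then obtain u v where "out = concat (map f u) @ h @ concat (map g v)" "u @ v \<in> L"
    "u \<in> lists H" "v \<in> lists H"
    by auto
  with trans_run_two_phase_intro[OF this(3,4)] show
    "out \<in> transduce (two_phase_transducer H f h g) 0 {1} L"
    unfolding transduce_def by blast
qed

definition emitting_transducer :: "nat set \<Rightarrow> (nat \<times> nat list \<times> nat list \<times> nat) set" where
  "emitting_transducer H = (\<lambda>d. (0, [], [d], 0)) ` H"

lemma finite_emitting_transducer: "finite H \<Longrightarrow> finite (emitting_transducer H)"
  by (simp add: emitting_transducer_def)

lemma trans_run_emitting_output: "trans_run (emitting_transducer H) p u v q \<Longrightarrow> v \<in> lists H"
  by (induction rule: trans_run.induct) (auto simp: emitting_transducer_def)

lemma trans_run_emitting_intro: "v \<in> lists H \<Longrightarrow> trans_run (emitting_transducer H) 0 [] v 0"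
proof (induction v)
  case (Cons d v)
  then show ?case
    using trans_run.step[of 0 "[]" "[d]" 0 "emitting_transducer H"]
    by (simp add: emitting_transducer_def)
qed (rule trans_run.nil)

lemma transduce_emitting: "[] \<in> L \<Longrightarrow> transduce (emitting_transducer H) 0 {0} L = lists H"
  unfolding transduce_def using trans_run_emitting_output trans_run_emitting_intro by blast

lemma closed_family_transduce:
  "closed_family \<F> \<Longrightarrow> finite \<Delta> \<Longrightarrow> finite Fin \<Longrightarrow> \<F> L \<Longrightarrow> \<F> (transduce \<Delta> q0 Fin L)"
  by (simp add: closed_family_def)

lemma closed_family_two_phase:
  assumes "closed_family \<F>" "finite H" "\<F> L"
  shows "\<F> {concat (map f u) @ h @ concat (map g v) | u v. u @ v \<in> L \<and> u @ v \<in> lists H}"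
proof -
  have "\<F> (transduce (two_phase_transducer H f h g) 0 {1} L)"
    using assms by (simp add: closed_family_transduce finite_two_phase_transducer)
  then show ?thesis by (simp only: transduce_two_phase)
qed

lemma closed_family_Int_lists:
  assumes "closed_family \<F>" "finite H" "\<F> L"
  shows "\<F> (L \<inter> lists H)"
proof -
  have "{concat (map (\<lambda>c. [c]) u) @ [] @ concat (map (\<lambda>c. [c]) v) | u v.
          u @ v \<in> L \<and> u @ v \<in> lists H} = L \<inter> lists H"
    by (auto intro: exI[of _ "[]"])
  with closed_family_two_phase[OF assms, of "\<lambda>c. [c]" "[]" "\<lambda>c. [c]"] show ?thesis
    by (simp only:)
qed

lemma closed_family_prefixes:
  assumes "closed_family \<F>" "finite H" "L \<subseteq> lists H" "\<F> L"
  shows "\<F> {u @ h | u v. u @ v \<in> L}"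
proof -
  have "{concat (map (\<lambda>c. [c]) u) @ h @ concat (map (\<lambda>c. []) v) | u v.
          u @ v \<in> L \<and> u @ v \<in> lists H} = {u @ h | u v. u @ v \<in> L}"
    using assms(3) by (fastforce simp: map_replicate_const)
  with closed_family_two_phase[OF assms(1,2,4), of "\<lambda>c. [c]" h "\<lambda>c. []"] show ?thesis
    by (simp only:)
qed

lemma closed_family_suffixes:
  assumes "closed_family \<F>" "finite H" "L \<subseteq> lists H" "\<F> L"
  shows "\<F> {h @ v | u v. u @ v \<in> L}"
proof -
  have "{concat (map (\<lambda>c. []) u) @ h @ concat (map (\<lambda>c. [c]) v) | u v.
          u @ v \<in> L \<and> u @ v \<in> lists H} = {h @ v | u v. u @ v \<in> L}"
    using assms(3) by (fastforce simp: map_replicate_const)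
  with closed_family_two_phase[OF assms(1,2,4), of "\<lambda>c. []" h "\<lambda>c. [c]"] show ?thesis
    by (simp only:)
qed

lemma closed_family_lists:
  assumes "closed_family \<F>" "finite H" "[] \<in> L" "\<F> L"
  shows "\<F> (lists H)"
  using closed_family_transduce[OF assms(1), of "emitting_transducer H" "{0}" L 0] assms
  by (simp add: finite_emitting_transducer transduce_emitting)

theorem theorem3p4:
  fixes \<F> :: "nat list set \<Rightarrow> bool"
    and X :: "nat set" and \<sigma> :: "nat \<Rightarrow> 's::semigroup_mult" and z :: nat
  assumes "closed_family \<F>"
    and "finite X"
    and "choice_of_generators (*) X \<sigma>"
    and "z \<notin> X"
  shows "\<F> (loop_problem (*) X \<sigma>) \<longleftrightarrow>
         \<F> (loop_problem mult0 (insert z X) (\<lambda>y. if y = z then None else Some (\<sigma> y)))"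
proof -
  let ?L = "loop_problem (*) X \<sigma>"
  let ?LZ = "loop_problem mult0 (insert z X) (\<lambda>y. if y = z then None else Some (\<sigma> y))"
  have finite_letters: "finite (doubled_alphabet X)" "finite (doubled_alphabet (insert z X))"
    using assms(2) by (simp_all add: finite_doubled_alphabet)
  have union: "\<And>A B. \<F> A \<Longrightarrow> \<F> B \<Longrightarrow> \<F> (A \<union> B)"
    and product: "\<And>A B. \<F> A \<Longrightarrow> \<F> B \<Longrightarrow> \<F> (lang_prod A B)"
    using assms(1) by (simp_all add: closed_family_def)
  have "\<F> ?LZ" if "\<F> ?L"
  proof -
    have "?L \<subseteq> lists (doubled_alphabet X)"
      by (auto simp: loop_problem_def dest: loop_path_letters)
    note prefixes = closed_family_prefixes[OF assms(1) finite_letters(1) this that]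
      and suffixes = closed_family_suffixes[OF assms(1) finite_letters(1) this that]
    have "[] \<in> ?L"
      by (simp add: loop_problem_def loop_path.nil)
    note middle = closed_family_lists[OF assms(1) finite_letters(2) this that]
    show ?thesis
      unfolding loop_problem_adjoin_zero[OF assms(4,3)]
      by (intro union product that prefixes suffixes middle)
  qed
  moreover have "\<F> ?L" if "\<F> ?LZ"
    using closed_family_Int_lists[OF assms(1) finite_letters(1) that]
    by (simp only: loop_problem_restrict[OF assms(4)])
  ultimately show ?thesis by blast
qed

end
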